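(* $\mathrm{Aut}(Q_D,\mathbb Z)\subseteq J_0\,O(3,1;\mathbb Z)\,J_0^{-1}$, where $J_0=\frac12\begin{pmatrix}1&1&1&1\\1&1&-1&-1\\1&-1&1&-1\\1&-1&-1&1\end{pmatrix}$; that is, for every $U\in\mathrm{Aut}(Q_D,\mathbb Z)$ the matrix $J_0^{-1}UJ_0$ has integer entries (and then lies in $O(3,1;\mathbb Z)$).
   Context: Let $Q_D=I-\frac12\mathbf 1\mathbf 1^T$ (where $\mathbf 1=(1,1,1,1)^T$) and $\mathrm{Aut}(Q_D,\mathbb Z)=\{U\in M_4(\mathbb Z): U^TQ_DU=Q_D\}$. Let $Q_L=\mathrm{diag}(-1,1,1,1)$ and $O(3,1;\mathbb Z)=\{U\in M_4(\mathbb Z):U^TQ_LU=Q_L\}$. Note $J_0=J_0^T=J_0^{-1}$. *)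

theory Defs
  imports "HOL-Analysis.Analysis"
begin

definition int_matrix :: "real^4^4 \<Rightarrow> bool" where
  "int_matrix U \<longleftrightarrow> (\<forall>i j. U $ i $ j \<in> \<int>)"

definition Q_D :: "real^4^4" where
  "Q_D = (\<chi> i j. (if i = j then 1 else 0) - 1/2)"

definition Q_L :: "real^4^4" where
  "Q_L = (\<chi> i j. if i = j then (if i = 1 then -1 else 1) else 0)"

definition Aut_QD_Z :: "(real^4^4) set" where
  "Aut_QD_Z = {U. int_matrix U \<and> transpose U ** Q_D ** U = Q_D}"

definition O31_Z :: "(real^4^4) set" where
  "O31_Z = {U. int_matrix U \<and> transpose U ** Q_L ** U = Q_L}"

definition J0 :: "real^4^4" where
  "J0 = (\<chi> i j. (1/2) *
     (if i = 1 \<or> j = 1 then 1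
      else if i = j then 1 else -1))"

end

theory Submission
  imports Defs
begin

text \<open>
  Write \<open>J0 = H / 2\<close> with \<open>H\<close> the \<open>\<plusminus>1\<close> Hadamard matrix; the claim is that
  every entry of \<open>H U H\<close> is divisible by 4. For integral \<open>U\<close>, the identity
  \<open>U\<^sup>T Q_D U = Q_D\<close> reads \<open>2 U\<^sup>T U - s s\<^sup>T = 2 I - 1 1\<^sup>T\<close>, \<open>s\<close> the vector of column
  sums. Its diagonal makes every column sum odd, and since \<open>U\<^sup>T\<close> is again an
  automorphism, every row sum \<open>r\<^sub>i\<close> is odd as well. Summing the identity over all
  entries gives \<open>2 \<Sigma> r\<^sub>i\<^sup>2 - S\<^sup>2 = -8\<close> for the total sum \<open>S\<close>; as odd squares
  are 1 mod 8, this forces \<open>4 dvd S\<close>. Finally, every row of \<open>H\<close> has an even number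
  of entries \<open>-1\<close>, and flipping the signs of an even number of odd summands changes a
  sum by a multiple of 4; applied to rows and then to columns, this gives
  \<open>(H U H)\<^sub>x\<^sub>y = S\<close> mod 4.
  Membership in \<open>O(3,1;\<int>)\<close> then follows from \<open>J0 Q_D J0 = Q_L\<close>.
\<close>

lemma matrix_inv_involution:
  fixes A :: "'a::semiring_1^'n^'n"
  assumes "A ** A = mat 1"
  shows "matrix_inv A = A"
proof -
  have inverse: "A ** matrix_inv A = mat 1 \<and> matrix_inv A ** A = mat 1"
    unfolding matrix_inv_def by (rule someI[of _ A]) (simp add: assms)
  have "matrix_inv A = matrix_inv A ** (A ** A)"
    by (simp add: assms)
  also have "\<dots> = (matrix_inv A ** A) ** A"
    by (simp add: matrix_mul_assoc)
  also have "\<dots> = A"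
    using inverse by simp
  finally show ?thesis .
qed

lemma isometry_transpose:
  fixes U Q :: "'a::field^'n^'n"
  assumes Q: "Q ** Q = mat 1" and U: "transpose U ** Q ** U = Q"
  shows "U ** Q ** transpose U = Q"
proof -
  have "(Q ** transpose U ** Q) ** U = Q ** (transpose U ** Q ** U)"
    by (simp add: matrix_mul_assoc)
  then have "(Q ** transpose U ** Q) ** U = mat 1"
    by (simp add: Q U)
  then have right_inverse: "U ** (Q ** transpose U ** Q) = mat 1"
    using matrix_left_right_inverse by blast
  have "U ** Q ** transpose U = U ** Q ** transpose U ** (Q ** Q)"
    by (simp add: Q)
  also have "\<dots> = (U ** (Q ** transpose U ** Q)) ** Q"
    by (simp add: matrix_mul_assoc)
  also have "\<dots> = Q"
    by (simp add: right_inverse)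
  finally show ?thesis .
qed

lemma Q_D_involution: "Q_D ** Q_D = mat 1"
  by (simp add: vec_eq_iff matrix_matrix_mult_def mat_def Q_D_def sum_4 forall_4)

lemma J0_involution: "J0 ** J0 = mat 1"
  by (simp add: vec_eq_iff matrix_matrix_mult_def mat_def J0_def sum_4 forall_4)

lemma transpose_J0: "transpose J0 = J0"
  by (simp add: vec_eq_iff transpose_def J0_def forall_4)

lemma J0_Q_D_J0: "J0 ** Q_D ** J0 = Q_L"
  by (simp add: vec_eq_iff matrix_matrix_mult_def Q_L_def J0_def Q_D_def sum_4 forall_4)

lemma J0_Q_L_J0: "J0 ** Q_L ** J0 = Q_D"
proof -
  have "J0 ** Q_L ** J0 = (J0 ** J0) ** Q_D ** (J0 ** J0)"
    by (simp add: J0_Q_D_J0[symmetric] matrix_mul_assoc)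
  then show ?thesis
    by (simp add: J0_involution)
qed

lemma J0_conj_isometry:
  assumes "transpose U ** Q_D ** U = Q_D"
  shows "transpose (J0 ** U ** J0) ** Q_L ** (J0 ** U ** J0) = Q_L"
proof -
  have "transpose (J0 ** U ** J0) ** Q_L ** (J0 ** U ** J0)
      = J0 ** (transpose U ** (J0 ** Q_L ** J0) ** U) ** J0"
    by (simp add: matrix_transpose_mul transpose_J0 matrix_mul_assoc)
  then show ?thesis
    by (simp add: J0_Q_L_J0 assms J0_Q_D_J0)
qed

lemma Aut_QD_Z_transpose:
  assumes "U \<in> Aut_QD_Z"
  shows "transpose U \<in> Aut_QD_Z"
proof -
  have "int_matrix (transpose U)"
    using assms by (simp add: Aut_QD_Z_def int_matrix_def transpose_def)
  moreover have "U ** Q_D ** transpose U = Q_D"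
    using assms Q_D_involution isometry_transpose by (auto simp: Aut_QD_Z_def)
  ultimately show ?thesis
    by (simp add: Aut_QD_Z_def)
qed

lemma odd_if_double_minus_square_eq_one:
  fixes c :: int
  assumes "2 * m - c * c = 1"
  shows "odd c"
proof -
  have "c * c = 2 * m - 1"
    using assms by linarith
  then have "odd (c * c)"
    by simp
  then show ?thesis
    by simp
qed

lemma odd_square_mod_8:
  fixes r :: int
  assumes "odd r"
  shows "r\<^sup>2 mod 8 = 1"
proof -
  obtain k where r: "r = 2 * k + 1"
    using assms oddE by blast
  obtain m where "k * (k + 1) = 2 * m"
    by (metis evenE even_mult_iff even_plus_one_iff)
  then have "r\<^sup>2 = 8 * m + 1"
    unfolding r by (simp add: power2_eq_square algebra_simps)
  then show ?thesis
    by simp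
qed

lemma four_dvd_sum_of_four_odd:
  fixes r :: "4 \<Rightarrow> int"
  assumes odd: "\<And>i. odd (r i)" and sq: "2 * (\<Sum>i\<in>UNIV. (r i)\<^sup>2) - (\<Sum>i\<in>UNIV. r i)\<^sup>2 = -8"
  shows "4 dvd (\<Sum>i\<in>UNIV. r i)"
proof -
  define Q where "Q = (\<Sum>i\<in>UNIV. (r i)\<^sup>2)"
  have "Q mod 8 = (\<Sum>i\<in>UNIV. (r i)\<^sup>2 mod 8) mod 8"
    unfolding Q_def by (rule mod_sum_eq[symmetric])
  also have "\<dots> = 4"
    by (simp add: odd_square_mod_8 odd)
  finally obtain q where "Q = 8 * q + 4"
    by (metis mod_div_decomp add.commute mult.commute)
  with sq have S: "(\<Sum>i\<in>UNIV. r i)\<^sup>2 = 16 * q + 16"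
    unfolding Q_def by linarith
  then have "even ((\<Sum>i\<in>UNIV. r i)\<^sup>2)"
    by simp
  then have "even (\<Sum>i\<in>UNIV. r i)"
    by simp
  then obtain t where t: "(\<Sum>i\<in>UNIV. r i) = 2 * t" ..
  with S have "t\<^sup>2 = 4 * q + 4"
    by (simp add: power_mult_distrib)
  then have "even (t\<^sup>2)"
    by simp
  then have "even t"
    by simp
  with t show ?thesis
    by auto
qed

lemma sum_signs_mod_4:
  fixes h u :: "'n::finite \<Rightarrow> int"
  assumes sign: "\<And>i. h i = 1 \<or> h i = -1" and even_negative: "even (card {i. h i = -1})"
    and odd: "\<And>i. odd (u i)"
  shows "(\<Sum>i\<in>UNIV. h i * u i) mod 4 = (\<Sum>i\<in>UNIV. u i) mod 4"
proof -
  define N where "N = {i. h i = -1}"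
  have "h i * u i = u i - 2 * (if i \<in> N then u i else 0)" for i
    using sign[of i] by (auto simp: N_def)
  then have "(\<Sum>i\<in>UNIV. h i * u i) = (\<Sum>i\<in>UNIV. u i) - 2 * (\<Sum>i\<in>UNIV. if i \<in> N then u i else 0)"
    by (simp add: sum_subtractf sum_distrib_left)
  also have "(\<Sum>i\<in>UNIV. if i \<in> N then u i else 0) = (\<Sum>i\<in>N. u i)"
    by (simp add: sum.inter_restrict[symmetric])
  finally have "(\<Sum>i\<in>UNIV. h i * u i) = (\<Sum>i\<in>UNIV. u i) - 2 * (\<Sum>i\<in>N. u i)" .
  moreover have "even (\<Sum>i\<in>N. u i)"
    using even_negative by (simp add: even_sum_iff odd N_def)
  then obtain k where "(\<Sum>i\<in>N. u i) = 2 * k" ..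
  ultimately have "(\<Sum>i\<in>UNIV. h i * u i) = (\<Sum>i\<in>UNIV. u i) + (- k) * 4"
    by simp
  then show ?thesis
    by (metis mod_mult_self1)
qed

lemma transpose_Q_D_mult_entry:
  fixes U :: "real^'n^4"
  shows "(transpose U ** Q_D ** U) $ j $ k
     = (\<Sum>i\<in>UNIV. U $ i $ j * U $ i $ k) - (\<Sum>i\<in>UNIV. U $ i $ j) * (\<Sum>i\<in>UNIV. U $ i $ k) / 2"
  by (simp add: matrix_matrix_mult_def transpose_def Q_D_def sum_4 field_simps)

lemma isometry_Q_D_int_gram:
  fixes a :: "4 \<Rightarrow> 4 \<Rightarrow> int"
  assumes isometry: "transpose U ** Q_D ** U = Q_D" and a: "\<And>i j. U $ i $ j = of_int (a i j)"
  shows "2 * (\<Sum>i\<in>UNIV. a i j * a i k) - (\<Sum>i\<in>UNIV. a i j) * (\<Sum>i\<in>UNIV. a i k)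
     = (if j = k then 1 else -1)"
proof -
  have "of_int (2 * (\<Sum>i\<in>UNIV. a i j * a i k) - (\<Sum>i\<in>UNIV. a i j) * (\<Sum>i\<in>UNIV. a i k))
      = 2 * (transpose U ** Q_D ** U) $ j $ k"
    by (simp add: transpose_Q_D_mult_entry a)
  also have "\<dots> = of_int (if j = k then 1 else -1)"
    unfolding isometry by (simp add: Q_D_def)
  finally show ?thesis
    by (simp only: of_int_eq_iff)
qed

lemma int_gram_total:
  fixes a :: "4 \<Rightarrow> 4 \<Rightarrow> int"
  assumes gram: "\<And>j k. 2 * (\<Sum>i\<in>UNIV. a i j * a i k) - (\<Sum>i\<in>UNIV. a i j) * (\<Sum>i\<in>UNIV. a i k)
     = (if j = k then 1 else -1)"
  shows "2 * (\<Sum>i\<in>UNIV. (\<Sum>j\<in>UNIV. a i j)\<^sup>2) - (\<Sum>i\<in>UNIV. \<Sum>j\<in>UNIV. a i j)\<^sup>2 = -8"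
proof -
  have gram': "2 * (\<Sum>i\<in>UNIV. a i j * a i k)
      = (\<Sum>i\<in>UNIV. a i j) * (\<Sum>i\<in>UNIV. a i k) + (if j = k then 1 else -1)" for j k
    using gram[of j k] by linarith
  have "2 * (\<Sum>i\<in>UNIV. (\<Sum>j\<in>UNIV. a i j)\<^sup>2)
      = (\<Sum>j\<in>UNIV. \<Sum>k\<in>UNIV. 2 * (\<Sum>i\<in>UNIV. a i j * a i k))"
    by (simp add: sum_4 power2_eq_square algebra_simps)
  also have "\<dots> = (\<Sum>j\<in>UNIV. \<Sum>k\<in>UNIV.
      (\<Sum>i\<in>UNIV. a i j) * (\<Sum>i\<in>UNIV. a i k) + (if j = k then 1 else -1))"
    by (simp only: gram')
  also have "\<dots> = (\<Sum>i\<in>UNIV. \<Sum>j\<in>UNIV. a i j)\<^sup>2 - 8"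
    by (simp add: sum_4 power2_eq_square algebra_simps)
  finally show ?thesis
    by linarith
qed

definition hadamard4 :: "4 \<Rightarrow> 4 \<Rightarrow> int" where
  "hadamard4 i j = (if i = 1 \<or> j = 1 \<or> i = j then 1 else -1)"

lemma J0_hadamard4: "J0 $ i $ j = of_int (hadamard4 i j) / 2"
  by (simp add: J0_def hadamard4_def)

lemma hadamard4_sym: "hadamard4 i j = hadamard4 j i"
  by (auto simp: hadamard4_def)

lemma hadamard4_sign: "hadamard4 i j = 1 \<or> hadamard4 i j = -1"
  by (simp add: hadamard4_def)

lemma even_card_hadamard4_negative: "even (card {j. hadamard4 i j = -1})"
proof -
  have "{j. hadamard4 i j = -1} = (if i = 1 then {} else UNIV - {1, i})"
    by (auto simp: hadamard4_def)
  then show ?thesis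
    by (simp add: card_Diff_subset)
qed

lemma J0_conj_entry:
  "(J0 ** U ** J0) $ x $ y
     = (\<Sum>i\<in>UNIV. of_int (hadamard4 x i) * (\<Sum>j\<in>UNIV. U $ i $ j * of_int (hadamard4 j y))) / 4"
  by (simp add: matrix_matrix_mult_def J0_hadamard4 sum_4 algebra_simps)

lemma four_dvd_hadamard4_conj:
  fixes a :: "4 \<Rightarrow> 4 \<Rightarrow> int"
  assumes row_odd: "\<And>i. odd (\<Sum>j\<in>UNIV. a i j)" and col_odd: "\<And>j. odd (\<Sum>i\<in>UNIV. a i j)"
    and total: "4 dvd (\<Sum>i\<in>UNIV. \<Sum>j\<in>UNIV. a i j)"
  shows "4 dvd (\<Sum>i\<in>UNIV. hadamard4 x i * (\<Sum>j\<in>UNIV. a i j * hadamard4 j y))"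
proof -
  define u where "u i = (\<Sum>j\<in>UNIV. hadamard4 y j * a i j)" for i
  have "even (u i - (\<Sum>j\<in>UNIV. a i j))" for i
    unfolding u_def sum_subtractf[symmetric]
    by (rule dvd_sum) (auto simp: hadamard4_def)
  then have u_odd: "odd (u i)" for i
    using row_odd[of i] by auto
  have "(\<Sum>i\<in>UNIV. hadamard4 x i * u i) mod 4 = (\<Sum>i\<in>UNIV. u i) mod 4"
    by (rule sum_signs_mod_4[OF hadamard4_sign even_card_hadamard4_negative u_odd])
  also have "(\<Sum>i\<in>UNIV. u i) = (\<Sum>j\<in>UNIV. hadamard4 y j * (\<Sum>i\<in>UNIV. a i j))"
    unfolding u_def sum_distrib_left by (rule sum.swap)
  also have "\<dots> mod 4 = (\<Sum>j\<in>UNIV. \<Sum>i\<in>UNIV. a i j) mod 4"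
    by (rule sum_signs_mod_4[OF hadamard4_sign even_card_hadamard4_negative col_odd])
  also have "(\<Sum>j\<in>UNIV. \<Sum>i\<in>UNIV. a i j) = (\<Sum>i\<in>UNIV. \<Sum>j\<in>UNIV. a i j)"
    by (rule sum.swap)
  also have "\<dots> mod 4 = 0"
    using total by simp
  finally have "4 dvd (\<Sum>i\<in>UNIV. hadamard4 x i * u i)"
    by (simp add: mod_eq_0_iff_dvd)
  moreover have "u i = (\<Sum>j\<in>UNIV. a i j * hadamard4 j y)" for i
    unfolding u_def by (rule sum.cong[OF refl]) (metis hadamard4_sym mult.commute)
  ultimately show ?thesis
    by simp
qed

lemma int_matrix_J0_conj:
  assumes "U \<in> Aut_QD_Z"
  shows "int_matrix (J0 ** U ** J0)"
proof -
  define a where "a i j = \<lfloor>U $ i $ j\<rfloor>" for i j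
  have a: "U $ i $ j = of_int (a i j)" for i j
    using assms unfolding Aut_QD_Z_def int_matrix_def a_def by (auto elim!: Ints_cases)
  have "transpose U ** Q_D ** U = Q_D"
    using assms by (simp add: Aut_QD_Z_def)
  note col_gram = isometry_Q_D_int_gram[OF this a]
  have transpose_isometry: "transpose (transpose U) ** Q_D ** transpose U = Q_D"
    using Aut_QD_Z_transpose[OF assms] by (simp add: Aut_QD_Z_def)
  have transpose_a: "transpose U $ i $ j = of_int (a j i)" for i j
    by (simp add: transpose_def a)
  note row_gram = isometry_Q_D_int_gram[OF transpose_isometry transpose_a]
  have col_odd: "odd (\<Sum>i\<in>UNIV. a i j)" for j
    using col_gram[of j j] by (intro odd_if_double_minus_square_eq_one) simp
  have row_odd: "odd (\<Sum>j\<in>UNIV. a i j)" for i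
    using row_gram[of i i] by (intro odd_if_double_minus_square_eq_one) simp
  have "4 dvd (\<Sum>i\<in>UNIV. \<Sum>j\<in>UNIV. a i j)"
    using four_dvd_sum_of_four_odd[OF row_odd int_gram_total[OF col_gram]] .
  then have entry_dvd: "4 dvd (\<Sum>i\<in>UNIV. hadamard4 x i * (\<Sum>j\<in>UNIV. a i j * hadamard4 j y))"
    for x y
    by (rule four_dvd_hadamard4_conj[OF row_odd col_odd])
  show ?thesis
    unfolding int_matrix_def
  proof (intro allI)
    fix x y
    obtain w where w: "(\<Sum>i\<in>UNIV. hadamard4 x i * (\<Sum>j\<in>UNIV. a i j * hadamard4 j y)) = 4 * w"
      using entry_dvd by blast
    have "(J0 ** U ** J0) $ x $ y
        = of_int (\<Sum>i\<in>UNIV. hadamard4 x i * (\<Sum>j\<in>UNIV. a i j * hadamard4 j y)) / 4"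
      by (simp add: J0_conj_entry a)
    then show "(J0 ** U ** J0) $ x $ y \<in> \<int>"
      unfolding w by simp
  qed
qed

theorem lemma7p2:
  assumes "U \<in> Aut_QD_Z"
  shows "int_matrix (matrix_inv J0 ** U ** J0) \<and> matrix_inv J0 ** U ** J0 \<in> O31_Z"
proof -
  have "transpose U ** Q_D ** U = Q_D"
    using assms by (simp add: Aut_QD_Z_def)
  then have "transpose (J0 ** U ** J0) ** Q_L ** (J0 ** U ** J0) = Q_L"
    by (rule J0_conj_isometry)
  with int_matrix_J0_conj[OF assms] show ?thesis
    by (simp add: matrix_inv_involution[OF J0_involution] O31_Z_def)
qed

end
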